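(* Let $\mathcal M$ be a compact smooth geodesically convex manifold of intrinsic dimension $d$ with a probability measure $\mu$, let $X_1,\dots,X_\ell$ be i.i.d. from $\mu$ and let $\mathbf x\in\mathcal M$. Assume $\mu(B_{\mathbf x}(r))\ge Qr^d$ for all $r\le R$, where $Q,R>0$. Let $X_{\mathcal M}^{(\ell)}(\mathbf x)$ be a point among $X_1,\dots,X_\ell$ minimizing $d_{\mathcal M}(\mathbf x,\cdot)$. Then for every $\lambda>0$, $$\int_0^{\lambda^2R^2}\Pr\Big[d_{\mathcal M}\big(\mathbf x,X_{\mathcal M}^{(\ell)}(\mathbf x)\big)>\frac{\sqrt r}{\lambda}\Big]\,dr\le\frac{2\lambda^2\,\ell^{-2/d}}{(1-e^{-Q})^2}.$$
   Context: $d_{\mathcal M}$ is the geodesic distance on $\mathcal M$ and $B_{\mathbf x}(r)=\{\mathbf x'\in\mathcal M:d_{\mathcal M}(\mathbf x,\mathbf x')<r\}$. *)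

theory Defs
  imports "HOL-Probability.Probability"
begin

definition nn_dist :: "'a::metric_space \<Rightarrow> (nat \<Rightarrow> 'a) \<Rightarrow> nat \<Rightarrow> real" where
  "nn_dist x X l = Min ((\<lambda>i. dist x (X i)) ` {..<l})"

definition geo_ball :: "'a::metric_space set \<Rightarrow> 'a \<Rightarrow> real \<Rightarrow> 'a set" where
  "geo_ball M x r = {x' \<in> M. dist x x' < r}"

end

theory Submission
  imports Defs
begin

text \<open>The sample points are independent, so the nearest-neighbour distance exceeds \<open>t\<close> with
  probability \<open>(1 - \<mu>(B(x,t)))^l \<le> exp (- l Q t^d)\<close> for \<open>0 < t \<le> R\<close>. At \<open>t = sqrt r / lam\<close> this
  is \<open>exp (- (b r) powr (d/2))\<close> with \<open>b = (l Q) powr (2/d) / lam\<^sup>2\<close>, whose integral over \<open>(0, \<infinity>)\<close>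
  is at most \<open>2/b\<close>; the remaining constant comes from \<open>(1 - exp (- Q))\<^sup>2 \<le> Q powr (2/d)\<close>.\<close>

lemma nn_dist_gt_iff:
  assumes "l \<ge> 1"
  shows "t < nn_dist x X l \<longleftrightarrow> (\<forall>i<l. t < dist x (X i))"
  using assms unfolding nn_dist_def by (subst Min_gr_iff) (auto simp: lessThan_empty_iff)

lemma measure_nn_dist_gt:
  fixes \<mu> :: "'a::metric_space measure"
  assumes sets: "sets \<mu> = sets (restrict_space borel M)"
    and "prob_space \<mu>" and "l \<ge> 1"
  shows "measure (PiM {..<l} (\<lambda>_. \<mu>)) {X \<in> space (PiM {..<l} (\<lambda>_. \<mu>)). t < nn_dist x X l}
           = measure \<mu> {y \<in> M. t < dist x y} ^ l"
proof -
  interpret P: finite_product_prob_space "\<lambda>_. \<mu>" "{..<l}"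
    by (intro finite_product_prob_space.intro finite_product_sigma_finite.intro
          product_prob_space.intro product_sigma_finite.intro finite_product_sigma_finite_axioms.intro
          product_prob_space_axioms.intro) (auto simp: assms(2) prob_space_imp_sigma_finite)
  define A where "A = {y \<in> M. t < dist x y}"
  have space: "space \<mu> = M"
    using sets_eq_imp_space_eq[OF sets] by (simp add: space_restrict_space)
  have "A = M \<inter> {y. t < dist x y}" by (auto simp: A_def)
  moreover have "{y. t < dist x y} \<in> sets borel"
    by (intro borel_open open_Collect_less continuous_intros)
  ultimately have "A \<in> sets \<mu>" unfolding sets sets_restrict_space by auto
  moreover have "{X \<in> space (PiM {..<l} (\<lambda>_. \<mu>)). t < nn_dist x X l} = (\<Pi>\<^sub>E i\<in>{..<l}. A)"
    unfolding space_PiM space A_def nn_dist_gt_iff[OF assms(3)] by (auto simp: PiE_iff extensional_def)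
  ultimately show ?thesis
    using P.prob_times[of "\<lambda>_. A"] by (simp add: A_def)
qed

lemma measure_dist_gt_le_one_minus_ball:
  fixes \<mu> :: "'a::metric_space measure"
  assumes sets: "sets \<mu> = sets (restrict_space borel M)" and "prob_space \<mu>"
  shows "measure \<mu> {y \<in> M. t < dist x y} \<le> 1 - measure \<mu> (geo_ball M x t)"
proof -
  interpret prob_space \<mu> by fact
  have space: "space \<mu> = M"
    using sets_eq_imp_space_eq[OF sets] by (simp add: space_restrict_space)
  have "{y. dist x y \<le> t} \<in> sets borel"
    by (intro borel_closed closed_Collect_le continuous_intros)
  then have closed_ball: "{y \<in> M. dist x y \<le> t} \<in> events"
    unfolding sets sets_restrict_space by auto
  have "{y \<in> M. t < dist x y} = space \<mu> - {y \<in> M. dist x y \<le> t}"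
    by (auto simp: space)
  then have "measure \<mu> {y \<in> M. t < dist x y} = 1 - measure \<mu> {y \<in> M. dist x y \<le> t}"
    using prob_compl[OF closed_ball] by simp
  moreover have "measure \<mu> (geo_ball M x t) \<le> measure \<mu> {y \<in> M. dist x y \<le> t}"
    by (rule finite_measure_mono[OF _ closed_ball]) (auto simp: geo_ball_def)
  ultimately show ?thesis by simp
qed

lemma measure_nn_dist_gt_le_exp:
  fixes \<mu> :: "'a::metric_space measure"
  assumes "sets \<mu> = sets (restrict_space borel M)" and "prob_space \<mu>" and "l \<ge> 1"
  shows "measure (PiM {..<l} (\<lambda>_. \<mu>)) {X \<in> space (PiM {..<l} (\<lambda>_. \<mu>)). t < nn_dist x X l}
           \<le> exp (- (real l * measure \<mu> (geo_ball M x t)))"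
proof -
  let ?p = "measure \<mu> (geo_ball M x t)"
  have "measure \<mu> {y \<in> M. t < dist x y} ^ l \<le> (1 - ?p) ^ l"
    using measure_dist_gt_le_one_minus_ball[OF assms(1,2)] by (intro power_mono) auto
  also have "\<dots> \<le> exp (- ?p) ^ l"
    using prob_space.prob_le_1[OF assms(2)] exp_ge_add_one_self[of "- ?p"]
    by (intro power_mono) auto
  also have "\<dots> = exp (- (real l * ?p))"
    by (simp add: exp_of_nat_mult[symmetric])
  finally show ?thesis
    using measure_nn_dist_gt[OF assms] by simp
qed

lemma set_integral_Ioo_FTC_nonneg:
  fixes F f :: "real \<Rightarrow> real"
  assumes "a < b"
    and "\<And>x. a < x \<Longrightarrow> x < b \<Longrightarrow> DERIV F x :> f x"
    and "\<And>x. a < x \<Longrightarrow> x < b \<Longrightarrow> isCont f x"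
    and "\<And>x. a < x \<Longrightarrow> x < b \<Longrightarrow> 0 \<le> f x"
    and "isCont F a" and "isCont F b"
  shows "set_integrable lborel {a<..<b} f"
    and "(LINT x:{a<..<b}|lborel. f x) = F b - F a"
proof -
  have lim_a: "((F \<circ> real_of_ereal) \<longlongrightarrow> F a) (at_right (ereal a))"
    unfolding ereal_tendsto_simps
    by (rule tendsto_mono[OF at_le]) (use \<open>isCont F a\<close> in \<open>auto simp: isCont_def\<close>)
  have lim_b: "((F \<circ> real_of_ereal) \<longlongrightarrow> F b) (at_left (ereal b))"
    unfolding ereal_tendsto_simps
    by (rule tendsto_mono[OF at_le]) (use \<open>isCont F b\<close> in \<open>auto simp: isCont_def\<close>)
  note FTC = interval_integral_FTC_nonneg[of "ereal a" "ereal b" F f, OF _ _ _ _ lim_a lim_b]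
  show "set_integrable lborel {a<..<b} f"
    using FTC(1) assms by simp
  show "(LINT x:{a<..<b}|lborel. f x) = F b - F a"
    using FTC(2) assms by (simp add: interval_lebesgue_integral_le_eq)
qed

lemma set_integral_exp_neg_sqrt_le:
  fixes c T :: real
  assumes "c > 0" and "T > 0"
  shows "(LINT r:{0<..<T}|lborel. exp (- (c * sqrt r))) \<le> 2 / c\<^sup>2"
proof -
  define F where "F r = - 2 * (c * sqrt r + 1) * exp (- (c * sqrt r)) / c\<^sup>2" for r
  have "DERIV F r :> exp (- (c * sqrt r))" if "r > 0" for r
    unfolding F_def using that \<open>c > 0\<close>
    by (auto intro!: derivative_eq_intros) (simp add: field_simps power2_eq_square power4_eq_xxxx)
  moreover have "isCont F r" for r
    unfolding F_def using \<open>c > 0\<close> by (intro continuous_intros) auto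
  moreover have "isCont (\<lambda>r. exp (- (c * sqrt r))) r" for r
    by (intro continuous_intros)
  ultimately have "(LINT r:{0<..<T}|lborel. exp (- (c * sqrt r))) = F T - F 0"
    using \<open>T > 0\<close> by (intro set_integral_Ioo_FTC_nonneg(2)) auto
  also have "\<dots> \<le> 2 / c\<^sup>2"
    unfolding F_def using assms by (simp add: field_simps)
  finally show ?thesis .
qed

lemma set_integral_exp_neg_le:
  fixes b T :: real
  assumes "b > 0" and "T > 0"
  shows "set_integrable lborel {0<..<T} (\<lambda>r. exp (- (b * r)))"
    and "(LINT r:{0<..<T}|lborel. exp (- (b * r))) \<le> 1 / b"
proof -
  define F where "F r = - exp (- (b * r)) / b" for r
  have "DERIV F r :> exp (- (b * r))" for r
    unfolding F_def using \<open>b > 0\<close> by (auto intro!: derivative_eq_intros)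
  moreover have "isCont F r" for r
    unfolding F_def using \<open>b > 0\<close> by (intro continuous_intros) auto
  moreover have "isCont (\<lambda>r. exp (- (b * r))) r" for r
    by (intro continuous_intros)
  ultimately have integrable: "set_integrable lborel {0<..<T} (\<lambda>r. exp (- (b * r)))"
    and integral: "(LINT r:{0<..<T}|lborel. exp (- (b * r))) = F T - F 0"
    using \<open>T > 0\<close> by (auto intro!: set_integral_Ioo_FTC_nonneg)
  show "set_integrable lborel {0<..<T} (\<lambda>r. exp (- (b * r)))"
    by (fact integrable)
  have "F T - F 0 \<le> 1 / b"
    unfolding F_def using assms by (simp add: field_simps)
  with integral show "(LINT r:{0<..<T}|lborel. exp (- (b * r))) \<le> 1 / b"
    by simp
qed

lemma set_integral_mono_majorant:
  fixes f g :: "'a \<Rightarrow> real"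
  assumes "set_integrable M A g"
    and "\<And>x. x \<in> A \<Longrightarrow> f x \<le> g x" and "\<And>x. x \<in> A \<Longrightarrow> 0 \<le> g x"
  shows "(LINT x:A|M. f x) \<le> (LINT x:A|M. g x)"
  using assms unfolding set_integrable_def set_lebesgue_integral_def
  by (intro integral_mono') (auto split: split_indicator)

text \<open>For \<open>p \<ge> 1\<close> the integrand is at most \<open>1\<close> on \<open>(0, 1/b]\<close> and at most \<open>exp (- b r)\<close> beyond.\<close>

lemma set_integral_exp_neg_powr_ge_one_le:
  fixes b p T :: real
  assumes "b > 0" and "p \<ge> 1" and "T > 0"
  shows "(LINT r:{0<..<T}|lborel. exp (- ((b * r) powr p))) \<le> 2 / b"
proof -
  define g where "g r = indicator {0<..1/b} r + exp (- (b * r))" for r :: real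
  have finite_part: "emeasure lborel ({0<..<T} \<inter> {0<..1/b}) < \<infinity>"
  proof -
    have "emeasure lborel ({0<..<T} \<inter> {0<..1/b}) \<le> emeasure lborel {0<..1/b}"
      by (intro emeasure_mono) auto
    also have "\<dots> < \<infinity>"
      using \<open>b > 0\<close> by (simp add: emeasure_lborel_Ioc)
    finally show ?thesis .
  qed
  have indicator_inter: "(\<lambda>r. indicator {0<..<T} r *\<^sub>R (indicator {0<..1/b} r :: real))
      = indicator ({0<..<T} \<inter> {0<..1/b})"
    by (auto simp: indicator_def)
  have int_indicator: "set_integrable lborel {0<..<T} (indicator {0<..1/b} :: real \<Rightarrow> real)"
    unfolding set_integrable_def indicator_inter using finite_part
    by (intro integrable_real_indicator) auto
  note int_exp = set_integral_exp_neg_le[OF \<open>b > 0\<close> \<open>T > 0\<close>]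
  have "exp (- ((b * r) powr p)) \<le> g r" if "r \<in> {0<..<T}" for r
  proof (cases "b * r \<le> 1")
    case True
    then have "g r = 1 + exp (- (b * r))"
      using that \<open>b > 0\<close> by (simp add: g_def field_simps)
    then show ?thesis
      by (smt (verit) exp_gt_zero exp_le_one_iff powr_ge_zero)
  next
    case False
    then have "(b * r) powr 1 \<le> (b * r) powr p"
      using \<open>p \<ge> 1\<close> by (intro powr_mono) auto
    then show ?thesis
      using False \<open>b > 0\<close> by (simp add: g_def indicator_def field_simps)
  qed
  then have "(LINT r:{0<..<T}|lborel. exp (- ((b * r) powr p))) \<le> (LINT r:{0<..<T}|lborel. g r)"
    unfolding g_def by (intro set_integral_mono_majorant set_integral_add(1) int_indicator int_exp(1))
      (auto simp: g_def)
  also have "\<dots> = measure lborel ({0<..<T} \<inter> {0<..1/b}) + (LINT r:{0<..<T}|lborel. exp (- (b * r)))"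
  proof -
    have "(LINT r:{0<..<T}|lborel. (indicator {0<..1/b} r :: real))
        = measure lborel ({0<..<T} \<inter> {0<..1/b})"
      unfolding set_lebesgue_integral_def indicator_inter by (simp add: integral_indicator)
    then show ?thesis
      unfolding g_def set_integral_add(2)[OF int_indicator int_exp(1)] by simp
  qed
  also have "measure lborel ({0<..<T} \<inter> {0<..1/b}) \<le> measure lborel {0<..1/b}"
    using \<open>b > 0\<close> by (intro measure_mono_fmeasurable) (auto simp: fmeasurable_def emeasure_lborel_Ioc)
  also have "\<dots> = 1 / b"
    using \<open>b > 0\<close> by simp
  also note int_exp(2)
  finally show ?thesis by simp
qed

text \<open>The case \<open>d = 1\<close> does not fit the previous lemma and is integrated exactly.\<close>

lemma set_integral_exp_neg_powr_half_le:
  fixes b T :: real and d :: nat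
  assumes "b > 0" and "d \<ge> 1" and "T > 0"
  shows "set_integrable lborel {0<..<T} (\<lambda>r. exp (- ((b * r) powr (real d / 2))))"
    and "(LINT r:{0<..<T}|lborel. exp (- ((b * r) powr (real d / 2)))) \<le> 2 / b"
proof -
  have "continuous_on {0..T} (\<lambda>r. exp (- ((b * r) powr (real d / 2))))"
    using assms by (intro continuous_intros continuous_on_powr') auto
  then show "set_integrable lborel {0<..<T} (\<lambda>r. exp (- ((b * r) powr (real d / 2))))"
    by (rule set_integrable_subset[OF borel_integrable_atLeastAtMost']) auto
  show "(LINT r:{0<..<T}|lborel. exp (- ((b * r) powr (real d / 2)))) \<le> 2 / b"
  proof (cases "d = 1")
    case True
    have "(b * r) powr (1 / 2) = sqrt b * sqrt r" if "r \<in> {0<..<T}" for r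
      using that \<open>b > 0\<close> by (simp add: powr_half_sqrt real_sqrt_mult)
    then have "(LINT r:{0<..<T}|lborel. exp (- ((b * r) powr (real d / 2))))
        = (LINT r:{0<..<T}|lborel. exp (- (sqrt b * sqrt r)))"
      using True by (intro set_lebesgue_integral_cong) auto
    also have "\<dots> \<le> 2 / (sqrt b)\<^sup>2"
      using assms by (intro set_integral_exp_neg_sqrt_le) auto
    finally show ?thesis
      using \<open>b > 0\<close> by simp
  next
    case False
    then show ?thesis
      using assms by (intro set_integral_exp_neg_powr_ge_one_le) auto
  qed
qed

lemma one_minus_exp_neg_le_powr:
  fixes Q p :: real
  assumes "Q > 0" and "0 < p" and "p \<le> 1"
  shows "1 - exp (- Q) \<le> Q powr p"
proof (cases "Q \<ge> 1")
  case True
  then show ?thesis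
    using ge_one_powr_ge_zero[of Q p] \<open>p > 0\<close> by (smt (verit) exp_gt_zero)
next
  case False
  have "1 - exp (- Q) \<le> Q"
    using exp_ge_add_one_self[of "- Q"] by simp
  also have "Q = Q powr 1"
    using \<open>Q > 0\<close> by simp
  also have "\<dots> \<le> Q powr p"
    using False assms by (intro powr_mono') auto
  finally show ?thesis .
qed

lemma mult_scaled_sqrt_pow_eq_powr:
  fixes c r lam :: real and d :: nat
  assumes "c > 0" and "r \<ge> 0" and "lam > 0" and "d \<ge> 1"
  shows "c * (sqrt r / lam) ^ d = (c powr (2 / real d) / lam\<^sup>2 * r) powr (real d / 2)"
proof (cases "r = 0")
  case True
  then show ?thesis
    using \<open>d \<ge> 1\<close> by simp
next
  case False
  define s where "s = sqrt r / lam"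
  have "s > 0"
    using False assms by (simp add: s_def)
  have "c powr (2 / real d) / lam\<^sup>2 * r = c powr (2 / real d) * s powr 2"
    using \<open>s > 0\<close> assms by (simp add: s_def power_divide powr_realpow)
  also have "\<dots> powr (real d / 2) = c powr (2 / real d * (real d / 2)) * s powr (2 * (real d / 2))"
    by (simp only: powr_mult powr_powr powr_ge_zero)
  also have "\<dots> = c * s ^ d"
    using \<open>s > 0\<close> assms by (simp add: powr_realpow)
  finally show ?thesis
    by (simp add: s_def)
qed

theorem lemmaA1:
  fixes M :: "'a::metric_space set" and \<mu> :: "'a measure"
    and d l :: nat and x :: 'a and Q R lam :: real
  assumes "compact M"
    and "sets \<mu> = sets (restrict_space borel M)"
    and "prob_space \<mu>"
    and "d \<ge> 1" and "l \<ge> 1"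
    and "x \<in> M"
    and "Q > 0" and "R > 0"
    and "\<And>r. 0 < r \<Longrightarrow> r \<le> R \<Longrightarrow> measure \<mu> (geo_ball M x r) \<ge> Q * r ^ d"
    and "lam > 0"
  shows "(LBINT r=0..lam\<^sup>2 * R\<^sup>2.
            measure (PiM {..<l} (\<lambda>_. \<mu>))
              {X \<in> space (PiM {..<l} (\<lambda>_. \<mu>)). nn_dist x X l > sqrt r / lam})
         \<le> 2 * lam\<^sup>2 * real l powr (- 2 / real d) / (1 - exp (- Q))\<^sup>2"
proof -
  let ?P = "PiM {..<l} (\<lambda>_. \<mu>)"
  define T where "T = lam\<^sup>2 * R\<^sup>2"
  define b where "b = (real l * Q) powr (2 / real d) / lam\<^sup>2"
  have "T > 0" and "b > 0"
    using assms by (simp_all add: T_def b_def)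
  have tail: "measure ?P {X \<in> space ?P. nn_dist x X l > sqrt r / lam}
      \<le> exp (- ((b * r) powr (real d / 2)))" if "r \<in> {0<..<T}" for r
  proof -
    have "sqrt r < sqrt T"
      using that by simp
    then have radius: "0 < sqrt r / lam" "sqrt r / lam \<le> R"
      using that assms by (auto simp: T_def real_sqrt_mult field_simps)
    have "measure ?P {X \<in> space ?P. nn_dist x X l > sqrt r / lam}
        \<le> exp (- (real l * measure \<mu> (geo_ball M x (sqrt r / lam))))"
      using assms(2,3,5) by (rule measure_nn_dist_gt_le_exp)
    also have "\<dots> \<le> exp (- (real l * Q * (sqrt r / lam) ^ d))"
      using assms(9)[OF radius] by (simp add: mult.assoc mult_left_mono)
    also have "real l * Q * (sqrt r / lam) ^ d = (b * r) powr (real d / 2)"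
      unfolding b_def using that assms by (intro mult_scaled_sqrt_pow_eq_powr) auto
    finally show ?thesis .
  qed
  have "(1 - exp (- Q))\<^sup>2 \<le> (Q powr (1 / real d))\<^sup>2"
    using assms by (intro power_mono one_minus_exp_neg_le_powr) auto
  also have "\<dots> = Q powr (2 / real d)"
    by (simp add: power2_eq_square powr_add[symmetric])
  finally have exp_Q: "(1 - exp (- Q))\<^sup>2 \<le> Q powr (2 / real d)" .
  have "(LBINT r=0..T. measure ?P {X \<in> space ?P. nn_dist x X l > sqrt r / lam})
      = (LINT r:{0<..<T}|lborel. measure ?P {X \<in> space ?P. nn_dist x X l > sqrt r / lam})"
    using \<open>T > 0\<close> by (simp add: interval_lebesgue_integral_le_eq zero_ereal_def)
  also have "\<dots> \<le> (LINT r:{0<..<T}|lborel. exp (- ((b * r) powr (real d / 2))))"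
    using tail set_integral_exp_neg_powr_half_le(1)[OF \<open>b > 0\<close> assms(4) \<open>T > 0\<close>]
    by (intro set_integral_mono_majorant) auto
  also have "\<dots> \<le> 2 / b"
    using \<open>b > 0\<close> assms(4) \<open>T > 0\<close> by (rule set_integral_exp_neg_powr_half_le(2))
  also have "\<dots> = 2 * lam\<^sup>2 * real l powr (- 2 / real d) / Q powr (2 / real d)"
    using assms by (simp add: b_def powr_mult powr_minus_divide field_simps)
  also have "\<dots> \<le> 2 * lam\<^sup>2 * real l powr (- 2 / real d) / (1 - exp (- Q))\<^sup>2"
    using exp_Q assms by (intro divide_left_mono) auto
  finally show ?thesis
    unfolding T_def .
qed

end
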